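(* Let $a\in C^2([0,T]\times[-\pi,\pi])$ solve $$\partial_t a+\Big(\int_{-\pi}^x a(t,\bar x)\,d\bar x\Big)\partial_x a-a^2+\frac1\pi\int_{-\pi}^{\pi}a^2\,dx=0,\qquad \int_{-\pi}^\pi a(t,x)dx=0,$$ and set $a_0=a(0,\cdot)$. Assume $a_0$ attains its maximum at an interior point $x_0^*\in(-\pi,\pi)$. Then for all $t\in[0,T]$, $x\mapsto a(t,x)$ attains its maximum at $x^*(t)$, the characteristic starting from $x_0^*$, and moreover $\partial_xa(t,x^*(t))=0$ and $\partial_x^2a(t,x^*(t))=\partial_x^2a_0(x_0^* )$.
   Context: The characteristic starting from $x_0^*$ is the solution of $\frac{d}{dt}x^*(t)=\int_{-\pi}^{x^*(t)}a(t,x)\,dx$, $x^*(0)=x_0^*$. *)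

theory Defs
  imports "HOL-Analysis.Analysis"
begin

definition rect :: "real \<Rightarrow> (real \<times> real) set" where
  "rect T = {0..T} \<times> {-pi..pi}"

definition C2_rect ::
  "real \<Rightarrow> (real \<Rightarrow> real \<Rightarrow> real) \<Rightarrow> (real \<Rightarrow> real \<Rightarrow> real) \<Rightarrow> (real \<Rightarrow> real \<Rightarrow> real)
    \<Rightarrow> (real \<Rightarrow> real \<Rightarrow> real) \<Rightarrow> (real \<Rightarrow> real \<Rightarrow> real) \<Rightarrow> (real \<Rightarrow> real \<Rightarrow> real)
    \<Rightarrow> (real \<Rightarrow> real \<Rightarrow> real) \<Rightarrow> bool" where
  "C2_rect T a a_at a_ax a_att a_atx a_axt a_axx \<longleftrightarrow>
     (\<forall>t\<in>{0..T}. \<forall>x\<in>{-pi..pi}.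
        ((\<lambda>s. a s x) has_real_derivative a_at t x) (at t within {0..T}) \<and>
        ((\<lambda>y. a t y) has_real_derivative a_ax t x) (at x within {-pi..pi}) \<and>
        ((\<lambda>s. a_at s x) has_real_derivative a_att t x) (at t within {0..T}) \<and>
        ((\<lambda>y. a_at t y) has_real_derivative a_atx t x) (at x within {-pi..pi}) \<and>
        ((\<lambda>s. a_ax s x) has_real_derivative a_axt t x) (at t within {0..T}) \<and>
        ((\<lambda>y. a_ax t y) has_real_derivative a_axx t x) (at x within {-pi..pi})) \<and>
     continuous_on (rect T) (\<lambda>(t,x). a t x) \<and>
     continuous_on (rect T) (\<lambda>(t,x). a_at t x) \<and>
     continuous_on (rect T) (\<lambda>(t,x). a_ax t x) \<and>
     continuous_on (rect T) (\<lambda>(t,x). a_att t x) \<and>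
     continuous_on (rect T) (\<lambda>(t,x). a_atx t x) \<and>
     continuous_on (rect T) (\<lambda>(t,x). a_axt t x) \<and>
     continuous_on (rect T) (\<lambda>(t,x). a_axx t x)"

end

(* With vel t x the integral of a t over [-pi..x] and energy t = (1/pi) * integral of (a t)^2, the
   equation reads a_at = a^2 - energy - vel * a_ax. Since vel t (-pi) = vel t pi = 0, |vel t x| is
   at most a constant times the distance from x to the boundary, so by Gronwall the characteristic
   xs, which solves xs' = vel t xs, never reaches -pi or pi.
   Along xs the equation gives d/dt a t (xs t) = a^2 - energy t. At any maximum point of a t the
   transport term vel * a_ax vanishes (a_ax = 0 in the interior, vel = 0 at the ends), so a
   Danskin-type argument bounds the upper right Dini derivative of amax t = max (a t) by
   amax^2 - energy t. The gap amax t - a t (xs t) is therefore nonnegative, vanishes at t = 0 and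
   has Dini derivative at most a constant times itself, hence it vanishes identically; Fermat's rule
   then gives a_ax t (xs t) = 0.
   Only C^2 regularity is available, so a_axx is not differentiated along xs. Instead the second
   difference G t = a t (xs t + h) - a t (xs t), which is a_axx t (xs t) h^2/2 + o(h^2) uniformly
   in t, has time derivative a(xs + h)^2 - a(xs)^2 - a_ax(xs + h) (vel(xs + h) - vel(xs)), in which
   the terms of order h^2 cancel. Hence a_axx t (xs t) - a_axx 0 x0 = o(1) as h -> 0. *)

theory Submission
  imports Defs
begin

lemma mvt_interval:
  fixes f :: "real \<Rightarrow> real"
  assumes "a \<le> b" "\<And>x. x \<in> {a..b} \<Longrightarrow> (f has_real_derivative f' x) (at x within {a..b})"
  obtains \<xi> where "\<xi> \<in> {a..b}" "f b - f a = f' \<xi> * (b - a)"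
  using mvt_very_simple[of a b f "\<lambda>x. (*) (f' x)"] assms that
  by (auto simp: has_field_derivative_def)

lemma has_real_derivative_interior_max_zero:
  assumes "(g has_real_derivative D) (at x within S)" "x \<in> interior S" "\<And>y. y \<in> S \<Longrightarrow> g y \<le> g x"
  shows "D = 0"
proof -
  have "(g has_derivative (*) D) (at x)"
    using assms(1,2) at_within_interior unfolding has_field_derivative_def by metis
  then have "(*) D = (\<lambda>v. 0)"
    using assms(2,3) interior_subset by (intro differential_zero_maxmin[OF assms(2) open_interior]) auto
  then show ?thesis by (metis mult_1_right)
qed

lemma has_real_derivative_right_step:
  assumes "(g has_real_derivative D) (at t within {0..T})" "t \<in> {0..<T}" "0 < e"
  shows "\<forall>\<^sub>F h in at_right 0. g t + h * (D - e) \<le> g (t + h)"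
proof -
  obtain d where d: "0 < d" and approx:
    "\<And>y. y \<in> {0..T} \<Longrightarrow> \<bar>y - t\<bar> < d \<Longrightarrow> \<bar>g y - g t - D * (y - t)\<bar> \<le> e * \<bar>y - t\<bar>"
    using assms(1,3) unfolding has_field_derivative_def has_derivative_within_alt
    by (auto simp: dist_real_def)
  show ?thesis
    unfolding eventually_at_right_field
  proof (intro exI[of _ "min d (T - t)"] conjI allI impI)
    fix h :: real assume "0 < h" "h < min d (T - t)"
    then show "g t + h * (D - e) \<le> g (t + h)"
      using approx[of "t + h"] assms(2) by (auto simp: algebra_simps abs_le_iff)
  qed (use d assms(2) in auto)
qed

lemma linear_approx_bound:
  fixes f f' :: "real \<Rightarrow> real"
  assumes S: "convex S" "x \<in> S" "x + h \<in> S"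
    and deriv: "\<And>y. y \<in> S \<Longrightarrow> (f has_real_derivative f' y) (at y within S)"
    and close: "\<And>y. y \<in> S \<Longrightarrow> \<bar>y - x\<bar> \<le> \<bar>h\<bar> \<Longrightarrow> \<bar>f' y - f' x\<bar> \<le> \<epsilon>"
  shows "\<bar>f (x + h) - f x - f' x * h\<bar> \<le> \<epsilon> * \<bar>h\<bar>"
proof -
  define I where "I = closed_segment x (x + h)"
  have I: "I \<subseteq> S" unfolding I_def by (rule closed_segment_subset[OF S(2,3,1)])
  have "norm ((\<lambda>y. f y - f' x * y) (x + h) - (\<lambda>y. f y - f' x * y) x) \<le> \<epsilon> * norm (x + h - x)"
  proof (rule field_differentiable_bound[OF convex_closed_segment])
    fix y assume "y \<in> closed_segment x (x + h)"
    then have "y \<in> S" "\<bar>y - x\<bar> \<le> \<bar>h\<bar>"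
      using I segment_bound(1)[of y x "x + h"] unfolding I_def by auto
    show "((\<lambda>y. f y - f' x * y) has_real_derivative f' y - f' x) (at y within closed_segment x (x + h))"
      using has_field_derivative_subset[OF deriv[OF \<open>y \<in> S\<close>] I] unfolding I_def
      by (auto intro!: derivative_eq_intros)
    show "norm (f' y - f' x) \<le> \<epsilon>" using close[OF \<open>y \<in> S\<close> \<open>\<bar>y - x\<bar> \<le> \<bar>h\<bar>\<close>] by simp
  qed auto
  then show ?thesis by (simp add: algebra_simps)
qed

lemma quadratic_approx_bound:
  fixes f f' :: "real \<Rightarrow> real"
  assumes S: "convex S" "x \<in> S" "x + h \<in> S"
    and deriv: "\<And>y. y \<in> S \<Longrightarrow> (f has_real_derivative f' y) (at y within S)"
    and close: "\<And>y. y \<in> S \<Longrightarrow> \<bar>y - x\<bar> \<le> \<bar>h\<bar> \<Longrightarrow> \<bar>f' y - f' x - q * (y - x)\<bar> \<le> \<epsilon> * \<bar>y - x\<bar>"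
    and "0 \<le> \<epsilon>"
  shows "\<bar>f (x + h) - f x - f' x * h - q * h\<^sup>2 / 2\<bar> \<le> \<epsilon> * h\<^sup>2"
proof -
  have "\<bar>(f (x + h) - q * (x + h - x)\<^sup>2 / 2) - (f x - q * (x - x)\<^sup>2 / 2) - (f' x - q * (x - x)) * h\<bar>
      \<le> (\<epsilon> * \<bar>h\<bar>) * \<bar>h\<bar>"
  proof (rule linear_approx_bound[OF S, where f = "\<lambda>y. f y - q * (y - x)\<^sup>2 / 2"
        and f' = "\<lambda>y. f' y - q * (y - x)" and \<epsilon> = "\<epsilon> * \<bar>h\<bar>"])
    fix y assume "y \<in> S"
    show "((\<lambda>y. f y - q * (y - x)\<^sup>2 / 2) has_real_derivative f' y - q * (y - x)) (at y within S)"
      using deriv[OF \<open>y \<in> S\<close>] by (auto intro!: derivative_eq_intros)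
    show "\<bar>f' y - q * (y - x) - (f' x - q * (x - x))\<bar> \<le> \<epsilon> * \<bar>h\<bar>" if "\<bar>y - x\<bar> \<le> \<bar>h\<bar>"
      using close[OF \<open>y \<in> S\<close> that] mult_left_mono[OF that \<open>0 \<le> \<epsilon>\<close>] by simp
  qed
  then show ?thesis by (simp add: algebra_simps power2_eq_square abs_mult_self)
qed

lemma product_expansion_error:
  fixes A M q h es ea ev \<epsilon> Kq Km :: real
  assumes A: "A = q * h\<^sup>2 / 2 + ea" and es: "\<bar>es\<bar> \<le> \<epsilon> * \<bar>h\<bar>" and ea: "\<bar>ea\<bar> \<le> \<epsilon> * h\<^sup>2"
    and ev: "\<bar>ev\<bar> \<le> \<epsilon> * \<bar>h\<bar>" and "\<bar>A\<bar> \<le> \<epsilon>" "\<bar>q\<bar> \<le> Kq" "\<bar>M\<bar> \<le> Km" "0 \<le> \<epsilon>" "\<epsilon> \<le> 1"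
  shows "\<bar>A * (A + 2 * M) - (q * h + es) * (M * h + ev)\<bar> \<le> \<epsilon> * h\<^sup>2 * (2 * Kq + 3 * Km + 2)"
proof -
  have hh: "\<bar>h\<bar> * \<bar>h\<bar> = h\<^sup>2" by (simp add: power2_eq_square abs_mult_self)
  have "\<epsilon> * \<epsilon> \<le> \<epsilon>" using assms(8,9) by (simp add: mult_left_le)
  have "\<bar>A\<bar> * (\<bar>q\<bar> * h\<^sup>2) \<le> \<epsilon> * (Kq * h\<^sup>2)"
    using assms(5,6,8) by (intro mult_mono mult_right_mono) auto
  moreover have "\<bar>A * (q * h\<^sup>2 / 2)\<bar> = \<bar>A\<bar> * (\<bar>q\<bar> * h\<^sup>2) / 2" by (simp add: abs_mult)
  moreover have "0 \<le> \<bar>A\<bar> * (\<bar>q\<bar> * h\<^sup>2)" by simp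
  moreover have "\<epsilon> * (Kq * h\<^sup>2) = \<epsilon> * h\<^sup>2 * Kq" by simp
  ultimately have b1: "\<bar>A * (q * h\<^sup>2 / 2)\<bar> \<le> \<epsilon> * h\<^sup>2 * Kq" by linarith
  have "\<bar>A\<bar> * \<bar>ea\<bar> \<le> \<epsilon> * (\<epsilon> * h\<^sup>2)"
    using assms(5,8) ea by (intro mult_mono) auto
  also have "\<dots> \<le> 1 * (\<epsilon> * h\<^sup>2)"
    using assms(8,9) by (intro mult_right_mono) auto
  finally have b2: "\<bar>A * ea\<bar> \<le> \<epsilon> * h\<^sup>2" by (simp add: abs_mult)
  have "\<bar>2 * M\<bar> * \<bar>ea\<bar> \<le> (2 * Km) * (\<epsilon> * h\<^sup>2)"
    using assms(7) ea by (intro mult_mono) auto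
  then have b3: "\<bar>2 * M * ea\<bar> \<le> \<epsilon> * h\<^sup>2 * Km * 2" by (simp add: abs_mult algebra_simps)
  have "\<bar>q\<bar> * \<bar>h\<bar> * \<bar>ev\<bar> \<le> Kq * \<bar>h\<bar> * (\<epsilon> * \<bar>h\<bar>)"
    using assms(6) ev by (intro mult_mono) (auto intro: mult_right_mono)
  then have b4: "\<bar>q * h * ev\<bar> \<le> \<epsilon> * h\<^sup>2 * Kq" using hh by (simp add: abs_mult algebra_simps)
  have "\<bar>es\<bar> * (\<bar>M\<bar> * \<bar>h\<bar>) \<le> (\<epsilon> * \<bar>h\<bar>) * (Km * \<bar>h\<bar>)"
    using assms(7,8) es by (intro mult_mono) (auto intro: mult_right_mono)
  then have b5: "\<bar>es * M * h\<bar> \<le> \<epsilon> * h\<^sup>2 * Km" using hh by (simp add: abs_mult algebra_simps)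
  have "\<bar>es\<bar> * \<bar>ev\<bar> \<le> (\<epsilon> * \<bar>h\<bar>) * (\<epsilon> * \<bar>h\<bar>)"
    using assms(8) es ev by (intro mult_mono) auto
  also have "\<dots> = (\<epsilon> * \<epsilon>) * h\<^sup>2" using hh by (simp add: algebra_simps)
  also have "\<dots> \<le> \<epsilon> * h\<^sup>2" using \<open>\<epsilon> * \<epsilon> \<le> \<epsilon>\<close> by (intro mult_right_mono) auto
  finally have b6: "\<bar>es * ev\<bar> \<le> \<epsilon> * h\<^sup>2" by (simp add: abs_mult)
  have "A * (A + 2 * M) - (q * h + es) * (M * h + ev)
      = A * (q * h\<^sup>2 / 2) + A * ea + 2 * M * ea - q * h * ev - es * M * h - es * ev"
    by (simp add: A algebra_simps power2_eq_square)
  moreover have "\<epsilon> * h\<^sup>2 * (2 * Kq + 3 * Km + 2)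
      = 2 * (\<epsilon> * h\<^sup>2 * Kq) + (\<epsilon> * h\<^sup>2 * Km * 2 + \<epsilon> * h\<^sup>2 * Km) + 2 * (\<epsilon> * h\<^sup>2)"
    by (simp add: algebra_simps)
  ultimately show ?thesis
    using b1 b2 b3 b4 b5 b6 by (simp only: abs_le_iff) linarith
qed

section \<open>Comparison principles\<close>

lemma gronwall_exp_lower_bound:
  fixes y y' :: "real \<Rightarrow> real"
  assumes t: "0 \<le> t"
    and deriv: "\<And>s. s \<in> {0..t} \<Longrightarrow> (y has_real_derivative y' s) (at s within {0..t})"
    and lower: "\<And>s. s \<in> {0..t} \<Longrightarrow> - K * y s \<le> y' s"
  shows "y 0 * exp (- K * t) \<le> y t"
proof -
  define g where "g s = y s * exp (K * s)" for s
  obtain \<xi> where \<xi>: "\<xi> \<in> {0..t}" "g t - g 0 = (y' \<xi> + K * y \<xi>) * exp (K * \<xi>) * (t - 0)"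
  proof (rule mvt_interval[OF t])
    fix s assume "s \<in> {0..t}"
    show "(g has_real_derivative (y' s + K * y s) * exp (K * s)) (at s within {0..t})"
      unfolding g_def by (rule derivative_eq_intros deriv[OF \<open>s \<in> _\<close>] refl | simp add: algebra_simps)+
  qed
  have "0 \<le> (y' \<xi> + K * y \<xi>) * exp (K * \<xi>) * t"
    using lower[OF \<xi>(1)] t by simp
  then have "y 0 \<le> y t * exp (K * t)"
    using \<xi>(2) unfolding g_def by simp
  then have "y 0 * exp (- K * t) \<le> y t * exp (K * t) * exp (- K * t)"
    by (rule mult_right_mono) simp
  also have "\<dots> = y t" by (simp flip: exp_add)
  finally show ?thesis .
qed

lemma first_exit_time:
  fixes y :: "real \<Rightarrow> real"
  assumes cont: "continuous_on {0..T} y" and S: "open S" "y 0 \<in> S"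
    and t: "t \<in> {0..T}" "y t \<notin> S"
  obtains t1 where "t1 \<in> {0<..T}" "y t1 \<notin> S" "y ` {0..t1} \<subseteq> closure S"
proof -
  define U where "U = {0..T} \<inter> y -` (- S)"
  have "closed U"
    unfolding U_def using S(1) by (intro continuous_closed_preimage cont) auto
  moreover have "t \<in> U" "bdd_below U"
    using t unfolding U_def by (auto intro: bdd_belowI[of _ 0])
  ultimately have t1U: "Inf U \<in> U"
    using closed_contains_Inf by blast
  have "Inf U \<noteq> 0" using t1U S(2) unfolding U_def by auto
  then have t1: "Inf U \<in> {0<..T}" using t1U unfolding U_def by auto
  have "y ` {0..<Inf U} \<subseteq> S"
  proof
    fix z assume "z \<in> y ` {0..<Inf U}"
    then obtain s where "s \<in> {0..<Inf U}" "z = y s" by blast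
    moreover have "s \<notin> U" using \<open>s \<in> _\<close> cInf_lower[OF _ \<open>bdd_below U\<close>, of s] by force
    ultimately show "z \<in> S" using t1 unfolding U_def by auto
  qed
  then have "y ` {0..<Inf U} \<subseteq> closure S" using closure_subset by blast
  then have "y ` closure {0..<Inf U} \<subseteq> closure S"
    using t1 by (intro image_closure_subset continuous_on_subset[OF cont]) auto
  then show ?thesis
    using that t1 t1U unfolding U_def by auto
qed

lemma interval_right_induct:
  fixes P :: "real \<Rightarrow> bool"
  assumes base: "P a" and closed: "closed {t \<in> {a..b}. P t}"
    and step: "\<And>t. t \<in> {a..<b} \<Longrightarrow> P t \<Longrightarrow> \<forall>\<^sub>F s in at_right t. P s"
    and t: "t \<in> {a..b}"
  shows "P t"
proof (rule ccontr)
  assume "\<not> P t"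
  with base t have "a < t" by (cases "a = t") auto
  from complete_interval[OF this base \<open>\<not> P t\<close>] obtain c where c: "a \<le> c" "c \<le> t"
    and below: "\<And>x. a \<le> x \<Longrightarrow> x < c \<Longrightarrow> P x"
    and maximal: "\<And>d. (\<forall>x. a \<le> x \<and> x < d \<longrightarrow> P x) \<Longrightarrow> d \<le> c"
    by blast
  have "P c"
  proof (cases "a = c")
    case False
    then have "closure {a..<c} \<subseteq> {t \<in> {a..b}. P t}"
      using below c t by (intro closure_minimal closed) auto
    then show ?thesis using False c by auto
  qed (use base in simp)
  then have "c < t" using c \<open>\<not> P t\<close> by (cases "c = t") auto
  then obtain d where "c < d" and right: "\<And>x. c < x \<Longrightarrow> x < d \<Longrightarrow> P x"
    using step[of c] c t \<open>P c\<close> unfolding eventually_at_right_field by auto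
  have "\<forall>x. a \<le> x \<and> x < d \<longrightarrow> P x"
    using below right \<open>P c\<close> by (metis linorder_neqE_linordered_idom)
  then show False using maximal \<open>c < d\<close> by fastforce
qed

lemma exp_supersolution_step:
  fixes \<eta> C s h u v :: real
  assumes "0 < \<eta>" "0 \<le> C" "0 \<le> s" "0 < h"
    and u: "u \<le> \<eta> * exp ((C + 1) * s)" and v: "v \<le> u + h * (C * u + \<eta>)"
  shows "v \<le> \<eta> * exp ((C + 1) * (s + h))"
proof -
  define \<phi> where "\<phi> = \<eta> * exp ((C + 1) * s)"
  have "\<eta> \<le> \<phi>" using assms(1-3) unfolding \<phi>_def by simp
  have "u + h * (C * u + \<eta>) \<le> \<phi> + h * (C * \<phi> + \<phi>)"
    using u \<open>\<eta> \<le> \<phi>\<close> assms(2,4) unfolding \<phi>_def[symmetric]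
    by (intro add_mono mult_left_mono) auto
  also have "\<dots> = \<phi> * (1 + (C + 1) * h)" by (simp add: algebra_simps)
  also have "\<dots> \<le> \<phi> * exp ((C + 1) * h)"
    using assms(1) unfolding \<phi>_def by (intro mult_left_mono exp_ge_add_one_self) auto
  also have "\<dots> = \<eta> * exp ((C + 1) * (s + h))"
    unfolding \<phi>_def by (simp add: algebra_simps flip: exp_add)
  finally show ?thesis using v by linarith
qed

lemma right_dini_gronwall_nonpos:
  fixes d :: "real \<Rightarrow> real"
  assumes cont: "continuous_on {0..T} d" and d0: "d 0 \<le> 0" and C: "0 \<le> C"
    and step: "\<And>t e. t \<in> {0..<T} \<Longrightarrow> 0 < e \<Longrightarrow>
      \<forall>\<^sub>F h in at_right 0. d (t + h) \<le> d t + h * (C * d t + e)"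
    and t: "t \<in> {0..T}"
  shows "d t \<le> 0"
proof -
  \<comment> \<open>d is dominated by every supersolution \<eta> exp((C+1)t) of the limiting inequality\<close>
  have dominated: "d t \<le> \<eta> * exp ((C + 1) * t)" if "0 < \<eta>" for \<eta>
  proof (rule interval_right_induct[where P = "\<lambda>t. d t \<le> \<eta> * exp ((C + 1) * t)", OF _ _ _ t])
    show "d 0 \<le> \<eta> * exp ((C + 1) * 0)" using d0 \<open>0 < \<eta>\<close> by simp
    have "continuous_on {0..T} (\<lambda>t. d t - \<eta> * exp ((C + 1) * t))"
      by (intro continuous_intros cont)
    then have "closed ({0..T} \<inter> (\<lambda>t. d t - \<eta> * exp ((C + 1) * t)) -` {..0})"
      by (rule continuous_closed_preimage) auto
    moreover have "{t \<in> {0..T}. d t \<le> \<eta> * exp ((C + 1) * t)}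
        = {0..T} \<inter> (\<lambda>t. d t - \<eta> * exp ((C + 1) * t)) -` {..0}"
      by auto
    ultimately show "closed {t \<in> {0..T}. d t \<le> \<eta> * exp ((C + 1) * t)}"
      by simp
  next
    fix s assume s: "s \<in> {0..<T}" and le: "d s \<le> \<eta> * exp ((C + 1) * s)"
    have "\<forall>\<^sub>F h in at_right 0. d (s + h) \<le> \<eta> * exp ((C + 1) * (s + h))"
      using eventually_conj[OF step[OF s \<open>0 < \<eta>\<close>] eventually_at_right_less]
      by (rule eventually_mono) (use exp_supersolution_step[OF \<open>0 < \<eta>\<close> C _ _ le] s in auto)
    then show "\<forall>\<^sub>F r in at_right s. d r \<le> \<eta> * exp ((C + 1) * r)"
      unfolding eventually_at_right_to_0[of _ s] by (simp add: add.commute)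
  qed
  show ?thesis
  proof (rule ccontr)
    assume "\<not> d t \<le> 0"
    then have "d t \<le> d t / (2 * exp ((C + 1) * t)) * exp ((C + 1) * t)"
      by (intro dominated) simp
    then show False using \<open>\<not> d t \<le> 0\<close> by simp
  qed
qed

definition rect_sup :: "real \<Rightarrow> (real \<Rightarrow> real \<Rightarrow> real) \<Rightarrow> real" where
  "rect_sup T f = Sup ((\<lambda>p. \<bar>case_prod f p\<bar>) ` rect T)"

lemma compact_rect: "compact (rect T)"
  unfolding rect_def by (intro compact_Times compact_Icc)

lemma abs_le_rect_sup:
  fixes f :: "real \<Rightarrow> real \<Rightarrow> real"
  assumes "continuous_on (rect T) (\<lambda>(t,x). f t x)" "t \<in> {0..T}" "x \<in> {-pi..pi}"
  shows "\<bar>f t x\<bar> \<le> rect_sup T f"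
proof -
  have "compact ((\<lambda>p. \<bar>case_prod f p\<bar>) ` rect T)"
    using assms(1) by (intro compact_continuous_image continuous_intros compact_rect) simp
  moreover have "\<bar>f t x\<bar> \<in> (\<lambda>p. \<bar>case_prod f p\<bar>) ` rect T"
    using assms(2,3) by (force simp: rect_def)
  ultimately show ?thesis
    unfolding rect_sup_def by (intro cSup_upper bounded_imp_bdd_above compact_imp_bounded)
qed

lemma rect_sup_nonneg:
  fixes f :: "real \<Rightarrow> real \<Rightarrow> real"
  assumes "continuous_on (rect T) (\<lambda>(t,x). f t x)" "0 \<le> T"
  shows "0 \<le> rect_sup T f"
  using abs_le_rect_sup[OF assms(1), of 0 0] assms(2) by simp

lemma rect_uniformly_continuous:
  fixes f :: "real \<Rightarrow> real \<Rightarrow> real"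
  assumes "continuous_on (rect T) (\<lambda>(t,x). f t x)" "0 < e"
  obtains d where "0 < d"
    "\<And>t s x y. t \<in> {0..T} \<Longrightarrow> s \<in> {0..T} \<Longrightarrow> x \<in> {-pi..pi} \<Longrightarrow> y \<in> {-pi..pi} \<Longrightarrow>
       \<bar>t - s\<bar> < d \<Longrightarrow> \<bar>x - y\<bar> < d \<Longrightarrow> \<bar>f t x - f s y\<bar> < e"
proof -
  have "uniformly_continuous_on (rect T) (\<lambda>(t,x). f t x)"
    using compact_uniformly_continuous[OF assms(1) compact_rect] .
  then obtain d where d: "0 < d" and close:
    "\<And>p q. p \<in> rect T \<Longrightarrow> q \<in> rect T \<Longrightarrow> dist q p < d \<Longrightarrow> dist (case_prod f q) (case_prod f p) < e"
    using assms(2) unfolding uniformly_continuous_on_def by metis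
  show ?thesis
  proof (rule that[of "d / 2"])
    fix t s x y
    assume "t \<in> {0..T}" "s \<in> {0..T}" "x \<in> {-pi..pi}" "y \<in> {-pi..pi}" "\<bar>t - s\<bar> < d / 2" "\<bar>x - y\<bar> < d / 2"
    moreover have "dist (t, x) (s, y) \<le> \<bar>t - s\<bar> + \<bar>x - y\<bar>"
      using sqrt_sum_squares_le_sum_abs[of "t - s" "x - y"] by (simp add: dist_Pair_Pair dist_real_def)
    ultimately show "\<bar>f t x - f s y\<bar> < e"
      using close[of "(s, y)" "(t, x)"] by (auto simp: rect_def dist_real_def)
  qed (use d in simp)
qed

lemma continuous_on_rect_slice:
  fixes f :: "real \<Rightarrow> real \<Rightarrow> real"
  assumes "continuous_on (rect T) (\<lambda>(t,x). f t x)" "t \<in> {0..T}"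
  shows "continuous_on {-pi..pi} (f t)"
proof -
  have "continuous_on {-pi..pi} (\<lambda>x. (\<lambda>(t,x). f t x) (t, x))"
    by (rule continuous_on_compose2[OF assms(1)])
      (use assms(2) in \<open>auto simp: rect_def intro!: continuous_intros\<close>)
  then show ?thesis by simp
qed

lemma rect_lipschitz_in_time:
  fixes f ft :: "real \<Rightarrow> real \<Rightarrow> real"
  assumes dt: "\<And>t x. t \<in> {0..T} \<Longrightarrow> x \<in> {-pi..pi} \<Longrightarrow>
      ((\<lambda>s. f s x) has_real_derivative ft t x) (at t within {0..T})"
    and ft: "continuous_on (rect T) (\<lambda>(t,x). ft t x)"
    and "t \<in> {0..T}" "s \<in> {0..T}" "x \<in> {-pi..pi}"
  shows "\<bar>f t x - f s x\<bar> \<le> rect_sup T ft * \<bar>t - s\<bar>"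
  using field_differentiable_bound[of "{0..T}" "\<lambda>s. f s x" "\<lambda>s. ft s x" "rect_sup T ft" t s]
    dt abs_le_rect_sup[OF ft] assms(3-5) by auto

lemma rect_time_increment_le:
  fixes f ft :: "real \<Rightarrow> real \<Rightarrow> real"
  assumes dt: "\<And>t x. t \<in> {0..T} \<Longrightarrow> x \<in> {-pi..pi} \<Longrightarrow>
      ((\<lambda>s. f s x) has_real_derivative ft t x) (at t within {0..T})"
    and ft: "continuous_on (rect T) (\<lambda>(t,x). ft t x)"
    and t: "t \<in> {0..T}" and e: "0 < e"
  obtains d where "0 < d" "\<And>h y. 0 < h \<Longrightarrow> h < d \<Longrightarrow> t + h \<le> T \<Longrightarrow> y \<in> {-pi..pi} \<Longrightarrow>
    f (t + h) y - f t y \<le> h * (ft t y + e)"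
proof -
  obtain d where d: "0 < d" and ft_close: "\<And>s r x y. s \<in> {0..T} \<Longrightarrow> r \<in> {0..T} \<Longrightarrow>
      x \<in> {-pi..pi} \<Longrightarrow> y \<in> {-pi..pi} \<Longrightarrow> \<bar>s - r\<bar> < d \<Longrightarrow> \<bar>x - y\<bar> < d \<Longrightarrow> \<bar>ft s x - ft r y\<bar> < e"
    using rect_uniformly_continuous[OF ft e] by blast
  have "f (t + h) y - f t y \<le> h * (ft t y + e)"
    if h: "0 < h" "h < d" "t + h \<le> T" and y: "y \<in> {-pi..pi}" for h y
  proof -
    obtain \<xi> where \<xi>: "\<xi> \<in> {t..t + h}" "f (t + h) y - f t y = ft \<xi> y * h"
    proof (rule mvt_interval[of t "t + h" "\<lambda>s. f s y" "\<lambda>s. ft s y"])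
      fix s assume "s \<in> {t..t + h}"
      then show "((\<lambda>s. f s y) has_real_derivative ft s y) (at s within {t..t + h})"
        using t h y by (intro has_field_derivative_subset[OF dt]) auto
    qed (use h in auto)
    have "\<xi> \<in> {0..T}" "\<bar>\<xi> - t\<bar> < d" using \<xi>(1) t h by auto
    then have "ft \<xi> y \<le> ft t y + e"
      using ft_close[OF _ t y y] d by fastforce
    then show ?thesis
      using \<xi>(2) h(1) by (simp add: mult.commute mult_left_mono)
  qed
  with d that show ?thesis by blast
qed

lemma has_derivative_rect_partials:
  fixes f ft fx :: "real \<Rightarrow> real \<Rightarrow> real"
  assumes dt: "\<And>t x. t \<in> {0..T} \<Longrightarrow> x \<in> {-pi..pi} \<Longrightarrow>
      ((\<lambda>s. f s x) has_real_derivative ft t x) (at t within {0..T})"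
    and dx: "\<And>t x. t \<in> {0..T} \<Longrightarrow> x \<in> {-pi..pi} \<Longrightarrow>
      (f t has_real_derivative fx t x) (at x within {-pi..pi})"
    and fx: "continuous_on (rect T) (\<lambda>(t,x). fx t x)"
    and p: "p \<in> rect T"
  shows "((\<lambda>(t,x). f t x) has_derivative (\<lambda>(ht, hx). ft (fst p) (snd p) * ht + fx (fst p) (snd p) * hx))
      (at p within rect T)"
proof -
  obtain s x where sx: "p = (s, x)" "s \<in> {0..T}" "x \<in> {-pi..pi}"
    using p unfolding rect_def by blast
  have fx_blinfun: "continuous_on (rect T) (\<lambda>(t,x). blinfun_mult_right (fx t x))"
    using bounded_linear.continuous_on[OF bounded_linear_blinfun_mult_right fx]
    by (simp add: case_prod_beta')
  have "((\<lambda>(t,x). f t x) has_derivative (\<lambda>(ht, hx). ft s x * ht + blinfun_mult_right (fx s x) hx))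
      (at (s, x) within {0..T} \<times> {-pi..pi})"
  proof (rule has_derivative_partialsI)
    show "((\<lambda>r. f r x) has_derivative (*) (ft s x)) (at s within {0..T})"
      using dt[OF sx(2,3)] by (simp add: has_field_derivative_def)
    show "(f r has_derivative blinfun_apply (blinfun_mult_right (fx r z))) (at z within {-pi..pi})"
      if "r \<in> {0..T}" "z \<in> {-pi..pi}" for r z
      using dx[OF that] by (simp add: has_field_derivative_def)
    show "continuous (at (s, x) within {0..T} \<times> {-pi..pi}) (\<lambda>(t,x). blinfun_mult_right (fx t x))"
      using fx_blinfun sx unfolding rect_def continuous_on_eq_continuous_within by auto
  qed (use sx in auto)
  then show ?thesis
    using sx unfolding rect_def by (simp add: split_beta' mult.commute)
qed

lemma has_real_derivative_rect_curve:
  fixes f ft fx :: "real \<Rightarrow> real \<Rightarrow> real" and y :: "real \<Rightarrow> real"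
  assumes dt: "\<And>t x. t \<in> {0..T} \<Longrightarrow> x \<in> {-pi..pi} \<Longrightarrow>
      ((\<lambda>s. f s x) has_real_derivative ft t x) (at t within {0..T})"
    and dx: "\<And>t x. t \<in> {0..T} \<Longrightarrow> x \<in> {-pi..pi} \<Longrightarrow>
      (f t has_real_derivative fx t x) (at x within {-pi..pi})"
    and fx: "continuous_on (rect T) (\<lambda>(t,x). fx t x)"
    and t: "t \<in> {0..T}"
    and dy: "(y has_real_derivative y') (at t within {0..T})"
    and y: "y ` {0..T} \<subseteq> {-pi..pi}"
  shows "((\<lambda>s. f s (y s)) has_real_derivative ft t (y t) + fx t (y t) * y') (at t within {0..T})"
proof -
  have "((\<lambda>s. (s, y s)) has_derivative (\<lambda>h. (h, h * y'))) (at t within {0..T})"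
    using dy unfolding has_field_derivative_def by (auto intro!: derivative_eq_intros simp: mult.commute)
  from has_derivative_in_compose2[OF has_derivative_rect_partials[OF dt dx fx] _ t this]
  have "((\<lambda>s. f s (y s)) has_derivative (\<lambda>h. ft t (y t) * h + fx t (y t) * (h * y')))
      (at t within {0..T})"
    using y by (auto simp: rect_def)
  moreover have "(\<lambda>h. ft t (y t) * h + fx t (y t) * (h * y')) = (*) (ft t (y t) + fx t (y t) * y')"
    by (rule ext) (simp add: algebra_simps)
  ultimately show ?thesis
    unfolding has_field_derivative_def by simp
qed

section \<open>Maxima over the space variable\<close>

lemma continuous_Sup_attained:
  fixes g :: "'a::topological_space \<Rightarrow> real"
  assumes "compact K" "K \<noteq> {}" "continuous_on K g"
  obtains y where "y \<in> K" "g y = Sup (g ` K)" "\<And>x. x \<in> K \<Longrightarrow> g x \<le> g y"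
proof -
  obtain y where "y \<in> K" "\<forall>x\<in>K. g x \<le> g y"
    using continuous_attains_sup[OF assms] by blast
  moreover have "Sup (g ` K) = g y"
    using calculation by (intro cSup_eq_maximum) auto
  ultimately show ?thesis using that by auto
qed

lemma Sup_image_diff_le:
  fixes f g :: "'a::topological_space \<Rightarrow> real"
  assumes K: "compact K" "K \<noteq> {}" and f: "continuous_on K f" and g: "continuous_on K g"
    and le: "\<And>x. x \<in> K \<Longrightarrow> f x - g x \<le> c"
  shows "Sup (f ` K) - Sup (g ` K) \<le> c"
proof -
  obtain y where y: "y \<in> K" "f y = Sup (f ` K)"
    using continuous_Sup_attained[OF K f] by blast
  obtain z where z: "z \<in> K" "g z = Sup (g ` K)" "\<And>x. x \<in> K \<Longrightarrow> g x \<le> g z"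
    using continuous_Sup_attained[OF K g] by blast
  show ?thesis using y z le[OF y(1)] by fastforce
qed

lemma near_argmax_strict_bound:
  fixes f g :: "'a::t2_space \<Rightarrow> real"
  assumes K: "compact K" and f: "continuous_on K f" and g: "continuous_on K g"
    and le_m: "\<And>x. x \<in> K \<Longrightarrow> f x \<le> m"
    and at_max: "\<And>y. y \<in> K \<Longrightarrow> f y = m \<Longrightarrow> g y < c"
  obtains \<eta> where "0 < \<eta>" "\<And>y. y \<in> K \<Longrightarrow> m - \<eta> < f y \<Longrightarrow> g y < c"
proof (cases "K \<inter> g -` {c..} = {}")
  case True
  then show ?thesis using that[of 1] by force
next
  case False
  have "closed (K \<inter> g -` {c..})"
    using continuous_closed_preimage[OF g compact_imp_closed[OF K] closed_atLeast] .
  then have "compact (K \<inter> g -` {c..})"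
    using compact_Int_closed[OF K] by (metis Int_assoc Int_absorb)
  moreover have "continuous_on (K \<inter> g -` {c..}) f"
    using f by (rule continuous_on_subset) auto
  ultimately obtain y where y: "y \<in> K \<inter> g -` {c..}" "\<And>x. x \<in> K \<inter> g -` {c..} \<Longrightarrow> f x \<le> f y"
    using continuous_Sup_attained[OF _ False] by metis
  have "f y < m" using y(1) le_m[of y] at_max[of y] by fastforce
  then show ?thesis
    using y by (intro that[of "m - f y"]) force+
qed

lemma Sup_slice_attained:
  fixes f :: "real \<Rightarrow> real \<Rightarrow> real"
  assumes "continuous_on (rect T) (\<lambda>(t,x). f t x)" "t \<in> {0..T}"
  obtains y where "y \<in> {-pi..pi}" "f t y = Sup (f t ` {-pi..pi})" "\<And>x. x \<in> {-pi..pi} \<Longrightarrow> f t x \<le> f t y"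
  by (rule continuous_Sup_attained[OF compact_Icc _ continuous_on_rect_slice[OF assms]])
    (use that in auto)

lemma Sup_slice_upper:
  fixes f :: "real \<Rightarrow> real \<Rightarrow> real"
  assumes "continuous_on (rect T) (\<lambda>(t,x). f t x)" "t \<in> {0..T}" "x \<in> {-pi..pi}"
  shows "f t x \<le> Sup (f t ` {-pi..pi})"
  using Sup_slice_attained[OF assms(1,2)] assms(3) by metis

lemma Sup_slice_lipschitz:
  fixes f ft :: "real \<Rightarrow> real \<Rightarrow> real"
  assumes dt: "\<And>t x. t \<in> {0..T} \<Longrightarrow> x \<in> {-pi..pi} \<Longrightarrow>
      ((\<lambda>s. f s x) has_real_derivative ft t x) (at t within {0..T})"
    and ft: "continuous_on (rect T) (\<lambda>(t,x). ft t x)"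
    and f: "continuous_on (rect T) (\<lambda>(t,x). f t x)"
    and t: "t \<in> {0..T}" and s: "s \<in> {0..T}"
  shows "Sup (f t ` {-pi..pi}) - Sup (f s ` {-pi..pi}) \<le> rect_sup T ft * \<bar>t - s\<bar>"
proof (rule Sup_image_diff_le[OF compact_Icc _ continuous_on_rect_slice[OF f t]
      continuous_on_rect_slice[OF f s]])
  show "f t x - f s x \<le> rect_sup T ft * \<bar>t - s\<bar>" if "x \<in> {-pi..pi}" for x
    using rect_lipschitz_in_time[OF dt ft t s that] by linarith
qed simp

lemma Sup_slice_right_step:
  fixes f ft :: "real \<Rightarrow> real \<Rightarrow> real"
  assumes f: "continuous_on (rect T) (\<lambda>(t,x). f t x)"
    and ft: "continuous_on (rect T) (\<lambda>(t,x). ft t x)"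
    and dt: "\<And>t x. t \<in> {0..T} \<Longrightarrow> x \<in> {-pi..pi} \<Longrightarrow>
      ((\<lambda>s. f s x) has_real_derivative ft t x) (at t within {0..T})"
    and t: "t \<in> {0..<T}"
    and at_max: "\<And>y. y \<in> {-pi..pi} \<Longrightarrow> f t y = Sup (f t ` {-pi..pi}) \<Longrightarrow> ft t y \<le> c"
    and e: "0 < e"
  shows "\<forall>\<^sub>F h in at_right 0. Sup (f (t + h) ` {-pi..pi}) \<le> Sup (f t ` {-pi..pi}) + h * (c + e)"
proof -
  define m where "m s = Sup (f s ` {-pi..pi})" for s
  define L where "L = rect_sup T ft"
  have tT: "t \<in> {0..T}" using t by auto
  have "0 \<le> L" unfolding L_def using rect_sup_nonneg[OF ft] tT by simp
  obtain d where "0 < d" and increment: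
    "\<And>h y. 0 < h \<Longrightarrow> h < d \<Longrightarrow> t + h \<le> T \<Longrightarrow> y \<in> {-pi..pi} \<Longrightarrow> f (t + h) y - f t y \<le> h * (ft t y + e / 2)"
    using rect_time_increment_le[OF dt ft tT, of "e / 2"] e by auto
  have "ft t y < c + e / 2" if "y \<in> {-pi..pi}" "f t y = m t" for y
    using at_max[of y] that e unfolding m_def by fastforce
  then obtain \<eta> where "0 < \<eta>" and near: "\<And>y. y \<in> {-pi..pi} \<Longrightarrow> m t - \<eta> < f t y \<Longrightarrow> ft t y < c + e / 2"
    using near_argmax_strict_bound[OF compact_Icc continuous_on_rect_slice[OF f tT]
        continuous_on_rect_slice[OF ft tT] Sup_slice_upper[OF f tT, folded m_def]]
    by blast
  show ?thesis
    unfolding eventually_at_right_field m_def[symmetric]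
  proof (intro exI[of _ "min (T - t) (min d (\<eta> / (2 * L + 1)))"] conjI allI impI)
    show "0 < min (T - t) (min d (\<eta> / (2 * L + 1)))"
      using t \<open>0 < d\<close> \<open>0 < \<eta>\<close> \<open>0 \<le> L\<close> by simp
    fix h :: real assume h0: "0 < h" and h_lt: "h < min (T - t) (min d (\<eta> / (2 * L + 1)))"
    have "h * (2 * L + 1) < \<eta>"
      using h_lt \<open>0 \<le> L\<close> by (simp add: pos_less_divide_eq)
    then have h: "t + h \<in> {0..T}" "h < d" "2 * L * h < \<eta>"
      using tT h0 h_lt by (auto simp: algebra_simps)
    obtain y where y: "y \<in> {-pi..pi}" "f (t + h) y = m (t + h)"
      using Sup_slice_attained[OF f h(1)] unfolding m_def by blast
    \<comment> \<open>a maximiser at time t + h is a near-maximiser at time t, where ft is below c\<close>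
    have "m t - m (t + h) \<le> L * h"
      using Sup_slice_lipschitz[OF dt ft f tT h(1)] h0 unfolding m_def L_def by simp
    moreover have "f (t + h) y - f t y \<le> L * h"
      using rect_lipschitz_in_time[OF dt ft h(1) tT y(1)] h0 unfolding L_def by simp
    ultimately have "ft t y < c + e / 2"
      using near[OF y(1)] h(3) y(2) by linarith
    then have "h * (ft t y + e / 2) \<le> h * (c + e)"
      using h0 e by (intro mult_left_mono) auto
    then have "f (t + h) y - f t y \<le> h * (c + e)"
      using increment[OF h0 h(2) _ y(1)] h(1) by auto
    then show "m (t + h) \<le> m t + h * (c + e)"
      using Sup_slice_upper[OF f tT y(1)] y(2) unfolding m_def by linarith
  qed
qed

section \<open>The solution along its characteristic\<close>

locale pde_characteristic =
  fixes T x0 :: real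
    and a a_at a_ax a_att a_atx a_axt a_axx :: "real \<Rightarrow> real \<Rightarrow> real"
    and xs :: "real \<Rightarrow> real"
  assumes T: "0 < T"
    and reg: "C2_rect T a a_at a_ax a_att a_atx a_axt a_axx"
    and pde: "\<forall>t\<in>{0..T}. \<forall>x\<in>{-pi..pi}.
                a_at t x + integral {-pi..x} (a t) * a_ax t x - (a t x)^2
                + (1/pi) * integral {-pi..pi} (\<lambda>y. (a t y)^2) = 0"
    and mean0: "\<forall>t\<in>{0..T}. integral {-pi..pi} (a t) = 0"
    and x0: "x0 \<in> {-pi<..<pi}"
    and max0: "\<forall>x\<in>{-pi..pi}. a 0 x \<le> a 0 x0"
    and char: "\<forall>t\<in>{0..T}. (xs has_real_derivative integral {-pi..xs t} (a t)) (at t within {0..T})"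
    and char0: "xs 0 = x0"
begin

definition vel :: "real \<Rightarrow> real \<Rightarrow> real" where
  "vel t x = integral {-pi..x} (a t)"

definition energy :: "real \<Rightarrow> real" where
  "energy t = (1/pi) * integral {-pi..pi} (\<lambda>y. (a t y)^2)"

definition amax :: "real \<Rightarrow> real" where
  "amax t = Sup (a t ` {-pi..pi})"

lemma
  assumes "t \<in> {0..T}" "x \<in> {-pi..pi}"
  shows a_deriv_t: "((\<lambda>s. a s x) has_real_derivative a_at t x) (at t within {0..T})"
    and a_deriv_x: "(a t has_real_derivative a_ax t x) (at x within {-pi..pi})"
    and a_ax_deriv_x: "(a_ax t has_real_derivative a_axx t x) (at x within {-pi..pi})"
  using reg assms unfolding C2_rect_def by auto

lemma
  shows a_cont: "continuous_on (rect T) (\<lambda>(t,x). a t x)"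
    and a_at_cont: "continuous_on (rect T) (\<lambda>(t,x). a_at t x)"
    and a_ax_cont: "continuous_on (rect T) (\<lambda>(t,x). a_ax t x)"
    and a_axx_cont: "continuous_on (rect T) (\<lambda>(t,x). a_axx t x)"
  using reg unfolding C2_rect_def by auto

lemma vel_deriv:
  assumes "t \<in> {0..T}" "x \<in> {-pi..pi}"
  shows "(vel t has_real_derivative a t x) (at x within {-pi..pi})"
  unfolding vel_def[abs_def]
  by (rule integral_has_real_derivative[OF continuous_on_rect_slice[OF a_cont assms(1)] assms(2)])

lemma vel_left: "vel t (-pi) = 0"
  unfolding vel_def by simp

lemma vel_right: "t \<in> {0..T} \<Longrightarrow> vel t pi = 0"
  unfolding vel_def using mean0 by simp

lemma a_at_pde:
  assumes "t \<in> {0..T}" "x \<in> {-pi..pi}"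
  shows "a_at t x = (a t x)\<^sup>2 - energy t - vel t x * a_ax t x"
  using pde assms unfolding vel_def energy_def by (auto simp: algebra_simps)

lemma abs_vel_le:
  assumes t: "t \<in> {0..T}" and x: "x \<in> {-pi..pi}"
  shows "\<bar>vel t x\<bar> \<le> rect_sup T a * (x + pi)" "\<bar>vel t x\<bar> \<le> rect_sup T a * (pi - x)"
proof -
  have cont: "continuous_on {c..d} (a t)" if "{c..d} \<subseteq> {-pi..pi}" for c d
    using continuous_on_subset[OF continuous_on_rect_slice[OF a_cont t] that] .
  have bound: "norm (a t y) \<le> rect_sup T a" if "y \<in> {-pi..pi}" for y
    using abs_le_rect_sup[OF a_cont t that] by simp
  show "\<bar>vel t x\<bar> \<le> rect_sup T a * (x + pi)"
    using integral_bound[of "-pi" x "a t"] cont bound x unfolding vel_def by auto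
  have "vel t x + integral {x..pi} (a t) = 0"
    using Henstock_Kurzweil_Integration.integral_combine[of "-pi" x pi "a t"]
      integrable_continuous_real[OF cont] mean0 t x
    unfolding vel_def by auto
  moreover have "\<bar>integral {x..pi} (a t)\<bar> \<le> rect_sup T a * (pi - x)"
    using integral_bound[of x pi "a t" "rect_sup T a"] cont bound x by auto
  ultimately show "\<bar>vel t x\<bar> \<le> rect_sup T a * (pi - x)"
    by (simp add: eq_neg_iff_add_eq_0)
qed

lemma xs_deriv: "t \<in> {0..T} \<Longrightarrow> (xs has_real_derivative vel t (xs t)) (at t within {0..T})"
  using char unfolding vel_def by blast

lemma xs_continuous: "continuous_on {0..T} xs"
  unfolding continuous_on_eq_continuous_within using xs_deriv DERIV_continuous by blast

lemma xs_interior: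
  assumes t: "t \<in> {0..T}"
  shows "xs t \<in> {-pi<..<pi}"
proof (rule ccontr)
  assume "xs t \<notin> {-pi<..<pi}"
  then obtain t1 where t1: "t1 \<in> {0<..T}" "xs t1 \<notin> {-pi<..<pi}" and inside: "xs ` {0..t1} \<subseteq> {-pi..pi}"
    using first_exit_time[OF xs_continuous open_greaterThanLessThan _ t] x0 char0 by auto
  define K where "K = rect_sup T a"
  have deriv: "(xs has_real_derivative vel s (xs s)) (at s within {0..t1})" if "s \<in> {0..t1}" for s
    using t1 that by (intro has_field_derivative_subset[OF xs_deriv]) auto
  have vel_le: "\<bar>vel s (xs s)\<bar> \<le> K * (xs s + pi) \<and> \<bar>vel s (xs s)\<bar> \<le> K * (pi - xs s)"
    if "s \<in> {0..t1}" for s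
  proof -
    have "s \<in> {0..T}" "xs s \<in> {-pi..pi}" using that t1 inside by (auto simp: image_subset_iff)
    then show ?thesis using abs_vel_le unfolding K_def by blast
  qed
  have "(pi - xs 0) * exp (- K * t1) \<le> pi - xs t1"
  proof (rule gronwall_exp_lower_bound[where y' = "\<lambda>s. - vel s (xs s)"])
    fix s assume s: "s \<in> {0..t1}"
    show "((\<lambda>s. pi - xs s) has_real_derivative - vel s (xs s)) (at s within {0..t1})"
      using deriv[OF s] by (auto intro!: derivative_eq_intros)
    show "- K * (pi - xs s) \<le> - vel s (xs s)"
      using vel_le[OF s] by (auto simp: abs_le_iff)
  qed (use t1 in auto)
  moreover have "(xs 0 + pi) * exp (- K * t1) \<le> xs t1 + pi"
  proof (rule gronwall_exp_lower_bound[where y' = "\<lambda>s. vel s (xs s)"])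
    fix s assume s: "s \<in> {0..t1}"
    show "((\<lambda>s. xs s + pi) has_real_derivative vel s (xs s)) (at s within {0..t1})"
      using deriv[OF s] by (auto intro!: derivative_eq_intros)
    show "- K * (xs s + pi) \<le> vel s (xs s)"
      using vel_le[OF s] by (auto simp: abs_le_iff)
  qed (use t1 in auto)
  moreover have "0 < (pi - xs 0) * exp (- K * t1)" "0 < (xs 0 + pi) * exp (- K * t1)"
    using x0 char0 by simp_all
  ultimately have "xs t1 \<in> {-pi<..<pi}" by simp
  then show False using t1 by simp
qed

lemma xs_in: "t \<in> {0..T} \<Longrightarrow> xs t \<in> {-pi..pi}"
  using xs_interior by fastforce

lemma has_real_derivative_along_char:
  assumes shift: "\<And>s. s \<in> {0..T} \<Longrightarrow> xs s + h \<in> {-pi..pi}" and t: "t \<in> {0..T}"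
  shows "((\<lambda>s. a s (xs s + h)) has_real_derivative
      (a t (xs t + h))\<^sup>2 - energy t - a_ax t (xs t + h) * (vel t (xs t + h) - vel t (xs t)))
      (at t within {0..T})"
proof -
  have "((\<lambda>s. xs s + h) has_real_derivative vel t (xs t)) (at t within {0..T})"
    using xs_deriv[OF t] by (auto intro!: derivative_eq_intros)
  moreover have "(\<lambda>s. xs s + h) ` {0..T} \<subseteq> {-pi..pi}" using shift by auto
  ultimately have "((\<lambda>s. a s (xs s + h)) has_real_derivative
      a_at t (xs t + h) + a_ax t (xs t + h) * vel t (xs t)) (at t within {0..T})"
    using has_real_derivative_rect_curve[OF a_deriv_t a_deriv_x a_ax_cont t] by simp
  moreover have "a_at t (xs t + h) + a_ax t (xs t + h) * vel t (xs t)
      = (a t (xs t + h))\<^sup>2 - energy t - a_ax t (xs t + h) * (vel t (xs t + h) - vel t (xs t))"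
    using a_at_pde[OF t shift[OF t]] by (simp add: algebra_simps)
  ultimately show ?thesis by simp
qed

lemma has_real_derivative_a_char:
  "t \<in> {0..T} \<Longrightarrow> ((\<lambda>s. a s (xs s)) has_real_derivative (a t (xs t))\<^sup>2 - energy t) (at t within {0..T})"
  using has_real_derivative_along_char[of 0] xs_in by simp

lemma a_at_at_max:
  assumes t: "t \<in> {0..T}" and y: "y \<in> {-pi..pi}" and max: "\<And>x. x \<in> {-pi..pi} \<Longrightarrow> a t x \<le> a t y"
  shows "a_at t y = (a t y)\<^sup>2 - energy t"
proof -
  have "vel t y * a_ax t y = 0"
  proof (cases "y \<in> {-pi<..<pi}")
    case True
    then show ?thesis
      using has_real_derivative_interior_max_zero[OF a_deriv_x[OF t y] _ max] by simp
  next
    case False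
    then have "y = -pi \<or> y = pi" using y by auto
    then show ?thesis using vel_left vel_right[OF t] by auto
  qed
  then show ?thesis using a_at_pde[OF t y] by simp
qed

lemma amax_attained:
  assumes "t \<in> {0..T}"
  obtains y where "y \<in> {-pi..pi}" "a t y = amax t" "\<And>x. x \<in> {-pi..pi} \<Longrightarrow> a t x \<le> a t y"
  using Sup_slice_attained[OF a_cont assms] unfolding amax_def by blast

lemma a_le_amax: "t \<in> {0..T} \<Longrightarrow> x \<in> {-pi..pi} \<Longrightarrow> a t x \<le> amax t"
  unfolding amax_def by (rule Sup_slice_upper[OF a_cont])

lemma abs_amax_le: "t \<in> {0..T} \<Longrightarrow> \<bar>amax t\<bar> \<le> rect_sup T a"
  by (metis amax_attained abs_le_rect_sup[OF a_cont])

lemma amax_continuous: "continuous_on {0..T} amax"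
proof -
  define L where "L = rect_sup T a_at"
  have "dist (amax t) (amax s) \<le> L * dist t s" if "t \<in> {0..T}" "s \<in> {0..T}" for t s
    using Sup_slice_lipschitz[OF a_deriv_t a_at_cont a_cont that]
      Sup_slice_lipschitz[OF a_deriv_t a_at_cont a_cont that(2,1)] abs_minus_commute[of s t]
    unfolding dist_real_def amax_def L_def by (auto simp: abs_le_iff)
  moreover have "0 \<le> L" unfolding L_def using rect_sup_nonneg[OF a_at_cont] T by simp
  ultimately have "L-lipschitz_on {0..T} amax"
    by (intro lipschitz_onI)
  then show ?thesis by (rule lipschitz_on_continuous_on)
qed

lemma amax_gap_right_step:
  assumes s: "s \<in> {0..<T}" and e: "0 < e"
  shows "\<forall>\<^sub>F h in at_right 0. amax (s + h) - a (s + h) (xs (s + h))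
    \<le> amax s - a s (xs s) + h * (2 * rect_sup T a * (amax s - a s (xs s)) + e)"
proof -
  define M where "M = amax s"
  define m where "m = a s (xs s)"
  have sT: "s \<in> {0..T}" using s by auto
  have at_max: "a_at s y \<le> M\<^sup>2 - energy s"
    if y: "y \<in> {-pi..pi}" and "a s y = Sup (a s ` {-pi..pi})" for y
  proof -
    have "a s y = M" using that(2) unfolding M_def amax_def .
    moreover have "a_at s y = (a s y)\<^sup>2 - energy s"
      by (rule a_at_at_max[OF sT y]) (use a_le_amax[OF sT] \<open>a s y = M\<close> in \<open>simp add: M_def\<close>)
    ultimately show ?thesis by simp
  qed
  have upper: "\<forall>\<^sub>F h in at_right 0. amax (s + h) \<le> M + h * (M\<^sup>2 - energy s + e / 2)"
    using Sup_slice_right_step[OF a_cont a_at_cont a_deriv_t s at_max half_gt_zero[OF e],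
        folded amax_def]
    unfolding M_def .
  have lower: "\<forall>\<^sub>F h in at_right 0. m + h * (m\<^sup>2 - energy s - e / 2) \<le> a (s + h) (xs (s + h))"
    using has_real_derivative_right_step[OF has_real_derivative_a_char[OF sT] s half_gt_zero[OF e]]
    unfolding m_def .
  have gap: "M\<^sup>2 - m\<^sup>2 \<le> 2 * rect_sup T a * (M - m)"
  proof -
    have "M\<^sup>2 - m\<^sup>2 = (M + m) * (M - m)" by (simp add: algebra_simps power2_eq_square)
    also have "\<dots> \<le> (2 * rect_sup T a) * (M - m)"
      using abs_amax_le[OF sT] abs_le_rect_sup[OF a_cont sT xs_in[OF sT]] a_le_amax[OF sT xs_in[OF sT]]
      unfolding M_def m_def by (intro mult_right_mono) auto
    finally show ?thesis .
  qed
  have "\<forall>\<^sub>F h in at_right 0. amax (s + h) - a (s + h) (xs (s + h))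
      \<le> M - m + h * (2 * rect_sup T a * (M - m) + e)"
    using upper lower eventually_at_right_less
  proof eventually_elim
    case (elim h)
    then have "amax (s + h) - a (s + h) (xs (s + h)) \<le> M - m + h * (M\<^sup>2 - m\<^sup>2 + e)"
      by (simp add: algebra_simps)
    also have "\<dots> \<le> M - m + h * (2 * rect_sup T a * (M - m) + e)"
      using gap elim(3) by (simp add: mult_left_mono)
    finally show ?case .
  qed
  then show ?thesis unfolding M_def m_def .
qed

lemma amax_eq_char:
  assumes t: "t \<in> {0..T}"
  shows "amax t = a t (xs t)"
proof -
  define d where "d s = amax s - a s (xs s)" for s
  have "continuous_on {0..T} (\<lambda>s. a s (xs s))"
    using has_real_derivative_a_char DERIV_continuous continuous_on_eq_continuous_within by blast
  then have "continuous_on {0..T} d"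
    unfolding d_def by (intro continuous_intros amax_continuous)
  moreover have "d 0 \<le> 0"
  proof -
    obtain y where "y \<in> {-pi..pi}" "a 0 y = amax 0"
      using amax_attained[of 0] T by auto
    then show ?thesis using max0 char0 unfolding d_def by force
  qed
  moreover have "0 \<le> 2 * rect_sup T a" using rect_sup_nonneg[OF a_cont] T by simp
  ultimately have "d t \<le> 0"
    using right_dini_gronwall_nonpos[OF _ _ _ amax_gap_right_step[folded d_def] t] by blast
  then show ?thesis using a_le_amax[OF t xs_in[OF t]] unfolding d_def by simp
qed

lemma a_le_char: "t \<in> {0..T} \<Longrightarrow> x \<in> {-pi..pi} \<Longrightarrow> a t x \<le> a t (xs t)"
  using a_le_amax amax_eq_char by simp

lemma a_ax_char_zero: "t \<in> {0..T} \<Longrightarrow> a_ax t (xs t) = 0"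
  using has_real_derivative_interior_max_zero[OF a_deriv_x[OF _ xs_in] _ a_le_char] xs_interior by simp

section \<open>The second derivative along the characteristic\<close>

lemma xs_margin:
  obtains \<delta> where "0 < \<delta>" "\<And>t y. t \<in> {0..T} \<Longrightarrow> \<bar>y - xs t\<bar> < \<delta> \<Longrightarrow> y \<in> {-pi..pi}"
proof -
  have "compact (xs ` {0..T})" using compact_continuous_image[OF xs_continuous compact_Icc] .
  moreover have "xs ` {0..T} \<subseteq> {-pi<..<pi}" using xs_interior by auto
  ultimately obtain \<delta> where "0 < \<delta>" "(\<Union>x\<in>xs ` {0..T}. ball x \<delta>) \<subseteq> {-pi<..<pi}"
    by (rule compact_subset_open_imp_ball_epsilon_subset[OF _ open_greaterThanLessThan])
  then show ?thesis
    using that[of \<delta>] by (force simp: dist_real_def abs_minus_commute)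
qed

definition small_oscillation :: "real \<Rightarrow> real \<Rightarrow> bool" where
  "small_oscillation \<epsilon> h \<longleftrightarrow> (\<forall>\<tau>\<in>{0..T}. \<forall>y. \<bar>y - xs \<tau>\<bar> \<le> \<bar>h\<bar> \<longrightarrow>
     y \<in> {-pi..pi} \<and> \<bar>a \<tau> y - a \<tau> (xs \<tau>)\<bar> \<le> \<epsilon> \<and> \<bar>a_axx \<tau> y - a_axx \<tau> (xs \<tau>)\<bar> \<le> \<epsilon>)"

lemma small_oscillation_exists:
  assumes "0 < \<epsilon>"
  obtains h where "0 < h" "small_oscillation \<epsilon> h"
proof -
  obtain \<delta> where \<delta>: "0 < \<delta>" "\<And>t y. t \<in> {0..T} \<Longrightarrow> \<bar>y - xs t\<bar> < \<delta> \<Longrightarrow> y \<in> {-pi..pi}"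
    using xs_margin by blast
  obtain d1 where d1: "0 < d1" and a_close: "\<And>t s x y. t \<in> {0..T} \<Longrightarrow> s \<in> {0..T} \<Longrightarrow>
      x \<in> {-pi..pi} \<Longrightarrow> y \<in> {-pi..pi} \<Longrightarrow> \<bar>t - s\<bar> < d1 \<Longrightarrow> \<bar>x - y\<bar> < d1 \<Longrightarrow> \<bar>a t x - a s y\<bar> < \<epsilon>"
    using rect_uniformly_continuous[OF a_cont assms] by blast
  obtain d2 where d2: "0 < d2" and a_axx_close: "\<And>t s x y. t \<in> {0..T} \<Longrightarrow> s \<in> {0..T} \<Longrightarrow>
      x \<in> {-pi..pi} \<Longrightarrow> y \<in> {-pi..pi} \<Longrightarrow> \<bar>t - s\<bar> < d2 \<Longrightarrow> \<bar>x - y\<bar> < d2 \<Longrightarrow> \<bar>a_axx t x - a_axx s y\<bar> < \<epsilon>"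
    using rect_uniformly_continuous[OF a_axx_cont assms] by blast
  define h where "h = min \<delta> (min d1 d2) / 2"
  have "small_oscillation \<epsilon> h"
    unfolding small_oscillation_def
  proof (intro ballI allI impI conjI)
    fix \<tau> y assume \<tau>: "\<tau> \<in> {0..T}" and "\<bar>y - xs \<tau>\<bar> \<le> \<bar>h\<bar>"
    then have y: "\<bar>y - xs \<tau>\<bar> < \<delta>" "\<bar>y - xs \<tau>\<bar> < d1" "\<bar>y - xs \<tau>\<bar> < d2"
      using \<delta>(1) d1 d2 unfolding h_def by auto
    show "y \<in> {-pi..pi}" using \<delta>(2)[OF \<tau> y(1)] .
    show "\<bar>a \<tau> y - a \<tau> (xs \<tau>)\<bar> \<le> \<epsilon>"
      using a_close[OF \<tau> \<tau> \<open>y \<in> _\<close> xs_in[OF \<tau>]] d1 y(2) by simp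
    show "\<bar>a_axx \<tau> y - a_axx \<tau> (xs \<tau>)\<bar> \<le> \<epsilon>"
      using a_axx_close[OF \<tau> \<tau> \<open>y \<in> _\<close> xs_in[OF \<tau>]] d2 y(3) by simp
  qed
  moreover have "0 < h" using \<delta>(1) d1 d2 unfolding h_def by simp
  ultimately show ?thesis using that by blast
qed

lemma char_increment_expansions:
  assumes osc: "small_oscillation \<epsilon> h" and \<tau>: "\<tau> \<in> {0..T}"
  shows "\<bar>a_ax \<tau> (xs \<tau> + h) - a_axx \<tau> (xs \<tau>) * h\<bar> \<le> \<epsilon> * \<bar>h\<bar>"
    and "\<bar>a \<tau> (xs \<tau> + h) - a \<tau> (xs \<tau>) - a_axx \<tau> (xs \<tau>) * h\<^sup>2 / 2\<bar> \<le> \<epsilon> * h\<^sup>2"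
    and "\<bar>vel \<tau> (xs \<tau> + h) - vel \<tau> (xs \<tau>) - a \<tau> (xs \<tau>) * h\<bar> \<le> \<epsilon> * \<bar>h\<bar>"
proof -
  define X where "X = xs \<tau>"
  define q where "q = a_axx \<tau> X"
  have X: "X \<in> {-pi..pi}" unfolding X_def using xs_in[OF \<tau>] .
  have near: "y \<in> {-pi..pi}" "\<bar>a \<tau> y - a \<tau> X\<bar> \<le> \<epsilon>" "\<bar>a_axx \<tau> y - q\<bar> \<le> \<epsilon>" if "\<bar>y - X\<bar> \<le> \<bar>h\<bar>" for y
    using osc \<tau> that unfolding small_oscillation_def X_def q_def by auto
  have "0 \<le> \<epsilon>" using near(2)[of X] by simp
  have slope: "\<bar>a_ax \<tau> (X + k) - q * k\<bar> \<le> \<epsilon> * \<bar>k\<bar>" if k: "\<bar>k\<bar> \<le> \<bar>h\<bar>" for k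
  proof -
    have "\<bar>a_ax \<tau> (X + k) - a_ax \<tau> X - a_axx \<tau> X * k\<bar> \<le> \<epsilon> * \<bar>k\<bar>"
    proof (rule linear_approx_bound[OF _ X])
      show "X + k \<in> {-pi..pi}" using near(1)[of "X + k"] k by simp
      show "\<bar>a_axx \<tau> y - a_axx \<tau> X\<bar> \<le> \<epsilon>" if "\<bar>y - X\<bar> \<le> \<bar>k\<bar>" for y
        using near(3)[of y] that k unfolding q_def by simp
    qed (auto intro: a_ax_deriv_x[OF \<tau>])
    then show ?thesis using a_ax_char_zero[OF \<tau>] unfolding X_def q_def by simp
  qed
  show "\<bar>a_ax \<tau> (xs \<tau> + h) - a_axx \<tau> (xs \<tau>) * h\<bar> \<le> \<epsilon> * \<bar>h\<bar>"
    using slope[of h] unfolding X_def q_def by simp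
  have "\<bar>a \<tau> (X + h) - a \<tau> X - a_ax \<tau> X * h - q * h\<^sup>2 / 2\<bar> \<le> \<epsilon> * h\<^sup>2"
  proof (rule quadratic_approx_bound[OF _ X])
    show "X + h \<in> {-pi..pi}" using near(1)[of "X + h"] by simp
    show "\<bar>a_ax \<tau> y - a_ax \<tau> X - q * (y - X)\<bar> \<le> \<epsilon> * \<bar>y - X\<bar>" if "\<bar>y - X\<bar> \<le> \<bar>h\<bar>" for y
      using slope[OF that] a_ax_char_zero[OF \<tau>] unfolding X_def by simp
  qed (use \<open>0 \<le> \<epsilon>\<close> in \<open>auto intro: a_deriv_x[OF \<tau>]\<close>)
  then show "\<bar>a \<tau> (xs \<tau> + h) - a \<tau> (xs \<tau>) - a_axx \<tau> (xs \<tau>) * h\<^sup>2 / 2\<bar> \<le> \<epsilon> * h\<^sup>2"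
    using a_ax_char_zero[OF \<tau>] unfolding X_def q_def by simp
  have "\<bar>vel \<tau> (X + h) - vel \<tau> X - a \<tau> X * h\<bar> \<le> \<epsilon> * \<bar>h\<bar>"
  proof (rule linear_approx_bound[OF _ X])
    show "X + h \<in> {-pi..pi}" using near(1)[of "X + h"] by simp
  qed (use near(2) in \<open>auto intro: vel_deriv[OF \<tau>]\<close>)
  then show "\<bar>vel \<tau> (xs \<tau> + h) - vel \<tau> (xs \<tau>) - a \<tau> (xs \<tau>) * h\<bar> \<le> \<epsilon> * \<bar>h\<bar>"
    unfolding X_def .
qed

lemma char_increment_deriv_bound:
  assumes osc: "small_oscillation \<epsilon> h" and "\<epsilon> \<le> 1" and \<tau>: "\<tau> \<in> {0..T}"
  shows "\<bar>(a \<tau> (xs \<tau> + h))\<^sup>2 - (a \<tau> (xs \<tau>))\<^sup>2 - a_ax \<tau> (xs \<tau> + h) * (vel \<tau> (xs \<tau> + h) - vel \<tau> (xs \<tau>))\<bar>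
    \<le> \<epsilon> * h\<^sup>2 * (2 * rect_sup T a_axx + 3 * rect_sup T a + 2)"
proof -
  define X where "X = xs \<tau>"
  define q where "q = a_axx \<tau> X"
  define M where "M = a \<tau> X"
  define A where "A = a \<tau> (X + h) - M"
  have X: "X \<in> {-pi..pi}" unfolding X_def using xs_in[OF \<tau>] .
  have "\<bar>A\<bar> \<le> \<epsilon>" using osc \<tau> unfolding small_oscillation_def A_def M_def X_def by simp
  then have "0 \<le> \<epsilon>" by simp
  note expansions = char_increment_expansions[OF osc \<tau>, folded X_def, folded q_def M_def]
  have "\<bar>A * (A + 2 * M)
        - (q * h + (a_ax \<tau> (X + h) - q * h)) * (M * h + (vel \<tau> (X + h) - vel \<tau> X - M * h))\<bar>
      \<le> \<epsilon> * h\<^sup>2 * (2 * rect_sup T a_axx + 3 * rect_sup T a + 2)"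
  proof (rule product_expansion_error[where ea = "A - q * h\<^sup>2 / 2"])
    show "\<bar>q\<bar> \<le> rect_sup T a_axx" unfolding q_def by (rule abs_le_rect_sup[OF a_axx_cont \<tau> X])
    show "\<bar>M\<bar> \<le> rect_sup T a" unfolding M_def by (rule abs_le_rect_sup[OF a_cont \<tau> X])
  qed (use expansions \<open>\<bar>A\<bar> \<le> \<epsilon>\<close> \<open>0 \<le> \<epsilon>\<close> \<open>\<epsilon> \<le> 1\<close> in \<open>auto simp: A_def\<close>)
  moreover have "A * (A + 2 * M) = (a \<tau> (X + h))\<^sup>2 - M\<^sup>2"
    unfolding A_def by (simp add: algebra_simps power2_eq_square)
  ultimately show ?thesis unfolding X_def M_def by simp
qed

lemma a_axx_char_drift:
  assumes \<epsilon>: "0 < \<epsilon>" "\<epsilon> \<le> 1" and t: "t \<in> {0..T}"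
  shows "\<bar>a_axx t (xs t) - a_axx 0 x0\<bar> \<le> 2 * \<epsilon> * (2 + (2 * rect_sup T a_axx + 3 * rect_sup T a + 2) * T)"
proof -
  define K where "K = 2 * rect_sup T a_axx + 3 * rect_sup T a + 2"
  have "0 \<le> K" unfolding K_def using rect_sup_nonneg[OF a_cont] rect_sup_nonneg[OF a_axx_cont] T by simp
  obtain h where "0 < h" and osc: "small_oscillation \<epsilon> h"
    using small_oscillation_exists[OF \<epsilon>(1)] by blast
  have shift: "xs s + h \<in> {-pi..pi}" if "s \<in> {0..T}" for s
    using osc that unfolding small_oscillation_def by simp
  define G where "G s = a s (xs s + h) - a s (xs s)" for s
  define q where "q s = a_axx s (xs s)" for s
  have "norm (G t - G 0) \<le> \<epsilon> * h\<^sup>2 * K * norm (t - 0)"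
  proof (rule field_differentiable_bound[where S = "{0..T}"])
    fix s assume s: "s \<in> {0..T}"
    show "(G has_real_derivative (a s (xs s + h))\<^sup>2 - (a s (xs s))\<^sup>2
        - a_ax s (xs s + h) * (vel s (xs s + h) - vel s (xs s))) (at s within {0..T})"
      using DERIV_diff[OF has_real_derivative_along_char[OF shift s] has_real_derivative_a_char[OF s]]
      unfolding G_def[abs_def] by (simp add: algebra_simps)
    show "norm ((a s (xs s + h))\<^sup>2 - (a s (xs s))\<^sup>2
        - a_ax s (xs s + h) * (vel s (xs s + h) - vel s (xs s))) \<le> \<epsilon> * h\<^sup>2 * K"
      using char_increment_deriv_bound[OF osc \<epsilon>(2) s] unfolding K_def by simp
  qed (use t T in auto)
  then have drift: "\<bar>G t - G 0\<bar> \<le> \<epsilon> * h\<^sup>2 * K * T"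
    using t \<epsilon>(1) \<open>0 \<le> K\<close> by (simp add: order.trans[OF _ mult_left_mono])
  have expansion: "\<bar>G s - q s * h\<^sup>2 / 2\<bar> \<le> \<epsilon> * h\<^sup>2" if "s \<in> {0..T}" for s
    using char_increment_expansions(2)[OF osc that] unfolding G_def q_def by simp
  have "\<bar>(q t - q 0) * (h\<^sup>2 / 2)\<bar> \<le> (\<epsilon> * (2 + K * T)) * h\<^sup>2"
    using drift expansion[OF t] expansion[of 0] T by (simp add: abs_le_iff algebra_simps)
  then have "\<bar>q t - q 0\<bar> * (h\<^sup>2 / 2) \<le> (2 * \<epsilon> * (2 + K * T)) * (h\<^sup>2 / 2)"
    by (simp add: abs_mult)
  then have "\<bar>q t - q 0\<bar> \<le> 2 * \<epsilon> * (2 + K * T)"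
    by (rule mult_right_le_imp_le) (use \<open>0 < h\<close> in simp)
  then show ?thesis
    unfolding q_def K_def char0 .
qed

lemma a_axx_char_const:
  assumes t: "t \<in> {0..T}"
  shows "a_axx t (xs t) = a_axx 0 x0"
proof -
  define C where "C = 2 * (2 + (2 * rect_sup T a_axx + 3 * rect_sup T a + 2) * T)"
  have "0 < C" unfolding C_def using rect_sup_nonneg[OF a_cont] rect_sup_nonneg[OF a_axx_cont] T
    by (intro mult_pos_pos add_pos_nonneg mult_nonneg_nonneg) auto
  have "\<bar>a_axx t (xs t) - a_axx 0 x0\<bar> \<le> 0 + e" if "0 < e" for e
  proof -
    define \<epsilon> where "\<epsilon> = min 1 (e / C)"
    have "0 < \<epsilon>" "\<epsilon> \<le> 1" unfolding \<epsilon>_def using \<open>0 < C\<close> \<open>0 < e\<close> by auto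
    then have "\<bar>a_axx t (xs t) - a_axx 0 x0\<bar> \<le> C * \<epsilon>"
      using a_axx_char_drift[OF _ _ t] unfolding C_def by (simp add: mult_ac)
    also have "\<dots> \<le> C * (e / C)" unfolding \<epsilon>_def using \<open>0 < C\<close> by (intro mult_left_mono) auto
    finally show ?thesis using \<open>0 < C\<close> by simp
  qed
  then have "\<bar>a_axx t (xs t) - a_axx 0 x0\<bar> \<le> 0" by (rule field_le_epsilon)
  then show ?thesis by simp
qed

end

theorem corollary2p6:
  fixes T x0 :: real
    and a a_at a_ax a_att a_atx a_axt a_axx :: "real \<Rightarrow> real \<Rightarrow> real"
    and xs :: "real \<Rightarrow> real"
  assumes T: "0 < T"
    and reg: "C2_rect T a a_at a_ax a_att a_atx a_axt a_axx"
    and pde: "\<forall>t\<in>{0..T}. \<forall>x\<in>{-pi..pi}.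
                a_at t x + integral {-pi..x} (a t) * a_ax t x - (a t x)^2
                + (1/pi) * integral {-pi..pi} (\<lambda>y. (a t y)^2) = 0"
    and mean0: "\<forall>t\<in>{0..T}. integral {-pi..pi} (a t) = 0"
    and x0: "x0 \<in> {-pi<..<pi}"
    and max0: "\<forall>x\<in>{-pi..pi}. a 0 x \<le> a 0 x0"
    and char: "\<forall>t\<in>{0..T}. (xs has_real_derivative integral {-pi..xs t} (a t)) (at t within {0..T})"
    and char0: "xs 0 = x0"
  shows "\<forall>t\<in>{0..T}. xs t \<in> {-pi..pi} \<and> (\<forall>x\<in>{-pi..pi}. a t x \<le> a t (xs t))
           \<and> a_ax t (xs t) = 0 \<and> a_axx t (xs t) = a_axx 0 x0"
proof -
  interpret pde_characteristic T x0 a a_at a_ax a_att a_atx a_axt a_axx xs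
    using assms by unfold_locales
  show ?thesis using xs_in a_le_char a_ax_char_zero a_axx_char_const by blast
qed

end
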